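(* Under the standing assumptions below, let $e,f\in S_1$ with $ef\in S_0$. Then $\|\theta(e)+\theta(f)-I\|_{HS}\le10\delta$ and $\|\theta(e)-\theta(f)\|_{HS}\ge\frac43-10\delta>1$.
   Context: Standing assumptions: $S$ is a semilattice (commutative semigroup of idempotents), $0\le\delta<0.03$, and $\theta:S\to M_2(\mathbb C)$ satisfies $\|\theta(e)\theta(f)-\theta(ef)\|_{HS}\le\delta$ for all $e,f\in S$, where $\|A\|_{HS}=(\operatorname{tr}(A^*A))^{1/2}$. For $k\in\{0,1,2\}$, $S_k=\{x\in S:\ |\operatorname{tr}\theta(x)-k|<0.95\}$; these sets are pairwise disjoint and cover $S$. *)

theory Defs
  imports "HOL-Analysis.Analysis"
begin

definition mtrace :: "complex^2^2 \<Rightarrow> complex" where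
  "mtrace A = (\<Sum>i\<in>UNIV. A $ i $ i)"

definition hs_norm :: "complex^2^2 \<Rightarrow> real" where
  "hs_norm A = sqrt (\<Sum>i\<in>UNIV. \<Sum>j\<in>UNIV. (cmod (A $ i $ j))^2)"

text \<open>The sets S_k (S = the whole semilattice type).\<close>
definition Sk :: "('a \<Rightarrow> complex^2^2) \<Rightarrow> nat \<Rightarrow> 'a set" where
  "Sk \<theta> k = {x. cmod (mtrace (\<theta> x) - of_nat k) < 0.95}"

end

theory Submission
  imports Defs
begin

(* Write a 2x2 matrix as M = (tr M / 2) I + X with X traceless; then X^2 = disc M * I
   and, with w = tr M - 1, one has M^2 - M = ((w^2 - 1)/4 + disc M) I + w X.  Since I and X are
   orthogonal for the Hilbert-Schmidt inner product, this gives exact formulas for ||M||^2 and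
   ||M^2 - M||^2 in terms of tr M, disc M and dev_sq M = ||X||^2 (norm_sq_split, defect_sq_split).
   The theorem follows: for A = theta e, B = theta f, C = theta (e f) the matrix I - A - B is
   almost idempotent (its defect is a sum of the multiplicativity defects plus 2C) and has trace
   close to 0, so ||A + B - I|| <= 10 delta (complement_small); and ||2B - I|| >= 2||X_B|| >= 4/3
   forces A and B apart (separation). *)

lemma hs_norm_eq_norm: "hs_norm M = norm M"
  unfolding hs_norm_def norm_vec_def L2_set_def
  by (simp add: real_sqrt_pow2 sum_nonneg)

lemma mtrace_2: "mtrace M = M$1$1 + M$2$2"
  by (simp add: mtrace_def sum_2)

lemma matrix_mult_2:
  fixes A B :: "complex^2^2"
  shows "(A ** B)$i$j = A$i$1 * B$1$j + A$i$2 * B$2$j"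
  by (simp add: matrix_matrix_mult_def sum_2)

lemma mat1_2:
  "(mat 1 :: complex^2^2)$1$1 = 1" "(mat 1 :: complex^2^2)$2$2 = 1"
  "(mat 1 :: complex^2^2)$1$2 = 0" "(mat 1 :: complex^2^2)$2$1 = 0"
  by (simp_all add: mat_def)

(* Squared Hilbert-Schmidt norm of the traceless part M - (tr M / 2) I. *)
definition dev_sq :: "complex^2^2 \<Rightarrow> real" where
  "dev_sq M = 2 * (cmod ((M$1$1 - M$2$2) / 2))^2 + (cmod (M$1$2))^2 + (cmod (M$2$1))^2"

(* The traceless part X of M satisfies X^2 = disc M * I (Cayley-Hamilton). *)
definition disc :: "complex^2^2 \<Rightarrow> complex" where
  "disc M = ((M$1$1 - M$2$2) / 2)^2 + M$1$2 * M$2$1"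

(* Pythagoras for the orthogonal splitting M = (tr M / 2) I + X. *)
lemma norm_sq_split: "(norm M)^2 = (cmod (mtrace M))^2 / 2 + dev_sq M"
proof -
  define s d where "s = M$1$1 + M$2$2" and "d = (M$1$1 - M$2$2) / 2"
  have "(cmod (M$1$1))^2 + (cmod (M$2$2))^2 = (cmod (s/2 + d))^2 + (cmod (s/2 - d))^2"
    by (simp add: s_def d_def field_simps)
  also have "\<dots> = (cmod s)^2 / 2 + 2 * (cmod d)^2"
    unfolding cmod_power2 by (simp add: power2_eq_square field_simps)
  finally show ?thesis
    unfolding norm_vec_def L2_set_def dev_sq_def mtrace_2
    by (simp add: real_sqrt_pow2 sum_nonneg sum_2 s_def d_def)
qed

lemma disc_bound: "2 * cmod (disc M) \<le> dev_sq M"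
proof -
  have "cmod (disc M) \<le> cmod (((M$1$1 - M$2$2) / 2)^2) + cmod (M$1$2 * M$2$1)"
    unfolding disc_def by (rule norm_triangle_ineq)
  then have "cmod (disc M) \<le> (cmod ((M$1$1 - M$2$2) / 2))^2 + cmod (M$1$2) * cmod (M$2$1)"
    by (simp only: norm_mult norm_power)
  moreover have "2 * (cmod (M$1$2) * cmod (M$2$1)) \<le> (cmod (M$1$2))^2 + (cmod (M$2$1))^2"
    using sum_squares_bound[of "cmod (M$1$2)" "cmod (M$2$1)"] by (simp add: power2_eq_square)
  ultimately show ?thesis unfolding dev_sq_def by linarith
qed

(* Exact formula for the idempotency defect: M^2 - M = ((w^2-1)/4 + disc M) I + w X. *)
lemma defect_sq_split:
  "(norm (M ** M - M))^2 = 2 * (cmod (((mtrace M - 1)^2 - 1) / 4 + disc M))^2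
     + (cmod (mtrace M - 1))^2 * dev_sq M"
proof -
  define w where "w = mtrace M - 1"
  have tr: "mtrace (M ** M - M) = 2 * ((w^2 - 1) / 4 + disc M)"
    unfolding w_def mtrace_2 disc_def
    by (simp add: matrix_mult_2) (simp add: power2_eq_square field_simps)
  have d: "((M ** M - M)$1$1 - (M ** M - M)$2$2) / 2 = w * ((M$1$1 - M$2$2) / 2)"
    and b: "(M ** M - M)$1$2 = w * M$1$2" and c: "(M ** M - M)$2$1 = w * M$2$1"
    unfolding w_def mtrace_2 by (simp_all add: matrix_mult_2) (simp_all add: field_simps)
  have dev: "dev_sq (M ** M - M) = (cmod w)^2 * dev_sq M"
    unfolding dev_sq_def d b c norm_mult power_mult_distrib by (simp add: algebra_simps)
  have "(cmod (mtrace (M ** M - M)))^2 / 2 = 2 * (cmod ((w^2 - 1) / 4 + disc M))^2"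
    unfolding tr norm_mult power_mult_distrib by simp
  then show ?thesis
    unfolding w_def[symmetric] using norm_sq_split[of "M ** M - M"] dev by linarith
qed

lemma defect_bounds:
  assumes hM: "norm (M ** M - M) \<le> \<eta>"
  defines "a \<equiv> cmod (((mtrace M - 1)^2 - 1) / 4 + disc M)"
  shows "2 * a^2 + (cmod (mtrace M - 1))^2 * dev_sq M \<le> \<eta>^2"
    and "cmod ((mtrace M - 1)^2 - 1) \<le> 4 * a + 2 * dev_sq M"
proof -
  show "2 * a^2 + (cmod (mtrace M - 1))^2 * dev_sq M \<le> \<eta>^2"
    using defect_sq_split[of M] power_mono[OF hM norm_ge_zero, of 2] unfolding a_def by simp
  define w where "w = mtrace M - 1"
  have "cmod (w^2 - 1) = 4 * cmod (((w^2 - 1) / 4 + disc M) - disc M)"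
    by (simp add: norm_divide)
  also have "\<dots> \<le> 4 * (a + cmod (disc M))"
    unfolding a_def w_def by (intro mult_left_mono norm_triangle_ineq4) simp
  also have "\<dots> \<le> 4 * a + 2 * dev_sq M"
    using disc_bound[of M] by simp
  finally show "cmod ((mtrace M - 1)^2 - 1) \<le> 4 * a + 2 * dev_sq M"
    unfolding w_def .
qed

(* Real core of the trace-near-1 case (p = |w|, nu = dev_sq M): a bootstrap in which a lower
   bound on nu improves the upper bound on p^2 and vice versa, starting from p < 0.95. *)
lemma trace_near_one_real:
  fixes p a \<nu> \<eta> :: real
  assumes p: "0 \<le> p" "p < 95/100" and \<nu>: "0 \<le> \<nu>" and \<eta>: "0 \<le> \<eta>" "\<eta> \<le> 3/100"
    and defect: "2 * a^2 + p^2 * \<nu> \<le> \<eta>^2" and disc: "1 - p^2 \<le> 4 * a + 2 * \<nu>"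
  shows "4/9 \<le> \<nu>" "p \<le> 3/2 * \<eta>"
proof -
  have \<eta>2: "\<eta>^2 \<le> 9/10000"
    using power_mono[OF \<eta>(2) \<eta>(1), of 2] by (simp add: power_divide)
  have "0 \<le> p^2 * \<nu>"
    using \<nu> by simp
  then have "a^2 \<le> (213/10000)^2"
    using defect \<eta>2 by (simp add: power_divide)
  then have "a \<le> 213/10000"
    by (rule power2_le_imp_le) simp
  then have lower: "1 - p^2 - 852/10000 \<le> 2 * \<nu>"
    using disc by linarith
  have upper: "p^2 * c \<le> \<eta>^2" if "c \<le> \<nu>" for c
    using mult_left_mono[OF that zero_le_power2[of p]] defect zero_le_power2[of a] by linarith
  have "p^2 < 9025/10000"
    using power_strict_mono[OF p(2) p(1), of 2] by (simp add: power_divide)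
  then have "p^2 * (615/100000) \<le> \<eta>^2"
    using lower by (intro upper) linarith
  then have "p^2 * (3842/10000) \<le> \<eta>^2"
    using lower \<eta>2 by (intro upper) linarith
  then have "p^2 * (4/9) \<le> \<eta>^2"
    using lower \<eta>2 by (intro upper) linarith
  then show "4/9 \<le> \<nu>"
    using lower \<eta>2 by linarith
  have "p^2 \<le> (3/2 * \<eta>)^2"
    using \<open>p^2 * (4/9) \<le> \<eta>^2\<close> by (simp add: power_mult_distrib power_divide)
  then show "p \<le> 3/2 * \<eta>"
    by (rule power2_le_imp_le) (use \<eta> in simp)
qed

(* Real core of the trace-near-0 case (q = |tr M|, r = |tr M - 2|, p = |tr M - 1|): as
   q r = |w^2 - 1| is small and r is close to 2, q must be small. *)
lemma trace_near_zero_real: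
  fixes p q r a \<nu> \<eta> :: real
  assumes q: "0 \<le> q" "q < 95/100" and r: "2 - q \<le> r" and p: "95/100 \<le> p"
    and \<nu>: "0 \<le> \<nu>" and \<eta>: "0 \<le> \<eta>" "\<eta> \<le> 3/100"
    and defect: "2 * a^2 + p^2 * \<nu> \<le> \<eta>^2" and factor: "q * r \<le> 4 * a + 2 * \<nu>"
  shows "q \<le> 8/5 * \<eta>"
proof -
  have p\<nu>: "(9/10) * \<nu> \<le> p^2 * \<nu>"
    using power_mono[OF p, of 2] \<nu> by (intro mult_right_mono) (simp_all add: power_divide)
  have \<eta>\<eta>: "\<eta>^2 \<le> 3/100 * \<eta>"
    using mult_right_mono[OF \<eta>(2) \<eta>(1)] by (simp add: power2_eq_square)
  have \<nu>_small: "30 * \<nu> \<le> \<eta>"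
    using p\<nu> defect \<eta>\<eta> zero_le_power2[of a] by linarith
  have "a^2 \<le> 5041/10000 * \<eta>^2"
    using defect p\<nu> \<nu> zero_le_power2[of \<eta>] by linarith
  also have "\<dots> = (71/100 * \<eta>)^2"
    by (simp add: power_mult_distrib power_divide)
  finally have "a^2 \<le> (71/100 * \<eta>)^2" .
  then have "a \<le> 71/100 * \<eta>"
    by (rule power2_le_imp_le) (use \<eta> in simp)
  then have qr: "q * r \<le> 291/100 * \<eta>"
    using factor \<nu>_small \<eta> by linarith
  have "q * (105/100) \<le> q * r"
    using r q by (intro mult_left_mono) simp_all
  then have "q \<le> 9/100"
    using qr \<eta> by linarith
  then have "q * (191/100) \<le> q * r"
    using r q by (intro mult_left_mono) simp_all
  then show "q \<le> 8/5 * \<eta>"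
    using qr \<eta> by linarith
qed

lemma trace_near_one:
  fixes M :: "complex^2^2"
  assumes hM: "norm (M ** M - M) \<le> \<eta>" and \<eta>: "0 \<le> \<eta>" "\<eta> \<le> 3/100"
    and tr: "cmod (mtrace M - 1) < 95/100"
  shows "cmod (mtrace M - 1) \<le> 3/2 * \<eta>" and "4/9 \<le> dev_sq M"
proof -
  have "1 - (cmod (mtrace M - 1))^2 \<le> cmod (1 - (mtrace M - 1)^2)"
    using norm_triangle_ineq2[of 1 "(mtrace M - 1)^2"] by (simp add: norm_power)
  then have disc: "1 - (cmod (mtrace M - 1))^2 \<le> 4 * cmod (((mtrace M - 1)^2 - 1) / 4 + disc M) + 2 * dev_sq M"
    using defect_bounds(2)[OF hM] by (simp add: norm_minus_commute)
  have "0 \<le> dev_sq M"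
    unfolding dev_sq_def by simp
  note real = trace_near_one_real[OF norm_ge_zero tr this \<eta> defect_bounds(1)[OF hM] disc]
  show "cmod (mtrace M - 1) \<le> 3/2 * \<eta>" "4/9 \<le> dev_sq M"
    using real by simp_all
qed

(* An almost idempotent matrix of trace near 0 has trace very close to 0; the case
   |tr M - 1| < 0.95 is excluded by trace_near_one. *)
lemma trace_near_zero:
  fixes M :: "complex^2^2"
  assumes hM: "norm (M ** M - M) \<le> \<eta>" and \<eta>: "0 \<le> \<eta>" "\<eta> \<le> 3/100"
    and tr: "cmod (mtrace M) < 95/100"
  shows "cmod (mtrace M) \<le> 8/5 * \<eta>"
proof -
  define \<tau> where "\<tau> = mtrace M"
  have far: "1 - cmod \<tau> \<le> cmod (\<tau> - 1)"
    using norm_triangle_ineq2[of 1 \<tau>] by (simp add: norm_minus_commute)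
  have p: "95/100 \<le> cmod (\<tau> - 1)"
  proof (rule ccontr)
    assume "\<not> 95/100 \<le> cmod (\<tau> - 1)"
    then have "cmod (\<tau> - 1) \<le> 3/2 * \<eta>"
      using trace_near_one(1)[OF hM \<eta>] unfolding \<tau>_def by simp
    then show False
      using far tr \<eta> unfolding \<tau>_def by linarith
  qed
  have r: "2 - cmod \<tau> \<le> cmod (\<tau> - 2)"
    using norm_triangle_ineq2[of 2 \<tau>] by (simp add: norm_minus_commute)
  have "cmod \<tau> * cmod (\<tau> - 2) = cmod ((\<tau> - 1)^2 - 1)"
    by (simp add: norm_mult[symmetric] power2_eq_square algebra_simps)
  then have factor: "cmod \<tau> * cmod (\<tau> - 2) \<le> 4 * cmod (((\<tau> - 1)^2 - 1) / 4 + disc M) + 2 * dev_sq M"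
    using defect_bounds(2)[OF hM] unfolding \<tau>_def by simp
  have "0 \<le> dev_sq M"
    unfolding dev_sq_def by simp
  from trace_near_zero_real[OF norm_ge_zero _ r p this \<eta> _ factor] show ?thesis
    using tr defect_bounds(1)[OF hM] unfolding \<tau>_def by simp
qed

(* If the trace is small, |w| is close to 1, so the defect bound makes the traceless part small. *)
lemma norm_bound_by_trace:
  fixes M :: "complex^2^2"
  assumes hM: "norm (M ** M - M) \<le> \<eta>" and tr: "cmod (mtrace M) \<le> t" and t: "t < 1"
  shows "(norm M)^2 \<le> t^2 / 2 + \<eta>^2 / (1 - t)^2"
proof -
  have "1 - t \<le> cmod (mtrace M - 1)"
    using tr norm_triangle_ineq2[of 1 "mtrace M"] by (simp add: norm_minus_commute)
  then have "(1 - t)^2 \<le> (cmod (mtrace M - 1))^2"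
    using t by (intro power_mono) simp_all
  then have "(1 - t)^2 * dev_sq M \<le> (cmod (mtrace M - 1))^2 * dev_sq M"
    by (rule mult_right_mono) (simp add: dev_sq_def)
  then have "(1 - t)^2 * dev_sq M \<le> \<eta>^2"
    using defect_bounds(1)[OF hM] by (smt (verit) zero_le_power2)
  then have dev: "dev_sq M \<le> \<eta>^2 / (1 - t)^2"
    using t by (simp add: pos_le_divide_eq mult.commute)
  have "(cmod (mtrace M))^2 \<le> t^2"
    using tr by (intro power_mono) simp_all
  then show ?thesis
    using norm_sq_split[of M] dev by linarith
qed

lemma norm_trace_near_zero:
  fixes M :: "complex^2^2"
  assumes hM: "norm (M ** M - M) \<le> \<eta>" and \<eta>: "0 \<le> \<eta>" "\<eta> \<le> 3/100"
    and tr: "cmod (mtrace M) < 95/100"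
  shows "norm M \<le> 2 * \<eta>"
proof -
  define t where "t = 8/5 * \<eta>"
  have tr_t: "cmod (mtrace M) \<le> t"
    unfolding t_def using trace_near_zero[OF assms] .
  have "1/2 \<le> (1 - t)^2"
    using power_mono[of "9/10" "1 - t" 2] \<eta> unfolding t_def by (simp add: power_divide)
  then have "\<eta>^2 / (1 - t)^2 \<le> \<eta>^2 / (1/2)"
    by (intro frac_le) simp_all
  then have dev: "\<eta>^2 / (1 - t)^2 \<le> 2 * \<eta>^2"
    by simp
  have tr_part: "t^2 / 2 = 32/25 * \<eta>^2"
    unfolding t_def by (simp add: power_mult_distrib power_divide)
  have "t < 1"
    unfolding t_def using \<eta> by simp
  then have "(norm M)^2 \<le> 32/25 * \<eta>^2 + 2 * \<eta>^2"
    using norm_bound_by_trace[OF hM tr_t] dev tr_part by linarith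
  also have "\<dots> \<le> (2 * \<eta>)^2"
    by (simp add: power_mult_distrib)
  finally have "(norm M)^2 \<le> (2 * \<eta>)^2" .
  then show ?thesis
    by (rule power2_le_imp_le) (use \<eta> in simp)
qed

lemma complement_defect:
  fixes A B C :: "complex^2^2"
  shows "(mat 1 - A - B) ** (mat 1 - A - B) - (mat 1 - A - B)
     = (A ** A - A) + (B ** B - B) + (A ** B - C) + (B ** A - C) + (C + C)"
  by (simp add: vec_eq_iff forall_2 matrix_mult_2 mat1_2 algebra_simps)

lemma mtrace_complement:
  fixes A B :: "complex^2^2"
  shows "mtrace (mat 1 - A - B) = - ((mtrace A - 1) + (mtrace B - 1))"
  by (simp add: mtrace_2 mat1_2)

lemma complement_small:
  fixes A B C :: "complex^2^2"
  assumes \<delta>: "0 \<le> \<delta>" "\<delta> \<le> 3/100"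
    and hA: "norm (A ** A - A) \<le> \<delta>" and hB: "norm (B ** B - B) \<le> \<delta>"
    and hC: "norm (C ** C - C) \<le> \<delta>"
    and hAB: "norm (A ** B - C) \<le> \<delta>" and hBA: "norm (B ** A - C) \<le> \<delta>"
    and trA: "cmod (mtrace A - 1) < 95/100" and trB: "cmod (mtrace B - 1) < 95/100"
    and trC: "cmod (mtrace C) < 95/100"
  shows "norm (A + B - mat 1) \<le> 10 * \<delta>"
proof -
  define M where "M = mat 1 - A - B"
  have "norm C \<le> 2 * \<delta>"
    using norm_trace_near_zero[OF hC \<delta> trC] .
  then have "norm (C + C) \<le> 4 * \<delta>"
    using norm_triangle_ineq[of C C] by linarith
  then have hM: "norm (M ** M - M) \<le> 8 * \<delta>"
    unfolding M_def complement_defect[of A B C]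
    using hA hB hAB hBA by (smt (verit) norm_triangle_ineq)
  have "cmod (mtrace M) \<le> cmod (mtrace A - 1) + cmod (mtrace B - 1)"
    unfolding M_def mtrace_complement norm_minus_cancel by (rule norm_triangle_ineq)
  then have trM: "cmod (mtrace M) \<le> 3 * \<delta>"
    using trace_near_one(1)[OF hA \<delta> trA] trace_near_one(1)[OF hB \<delta> trB] by linarith
  have "4/5 \<le> (1 - 3 * \<delta>)^2"
    using power_mono[of "9/10" "1 - 3 * \<delta>" 2] \<delta> by (simp add: power_divide)
  then have "(8 * \<delta>)^2 / (1 - 3 * \<delta>)^2 \<le> (8 * \<delta>)^2 / (4/5)"
    by (intro frac_le) simp_all
  moreover have "3 * \<delta> < 1"
    using \<delta> by simp
  ultimately have "(norm M)^2 \<le> (3 * \<delta>)^2 / 2 + (8 * \<delta>)^2 / (4/5)"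
    using norm_bound_by_trace[OF hM trM] by linarith
  also have "\<dots> \<le> (10 * \<delta>)^2"
    by (simp add: power_mult_distrib)
  finally have "norm M \<le> 10 * \<delta>"
    by (rule power2_le_imp_le) (use \<delta> in simp)
  moreover have "A + B - mat 1 = - M"
    unfolding M_def by simp
  ultimately show ?thesis
    by simp
qed

(* If B has a large traceless part, then 2B - I is large, so A cannot be close to B when
   A + B is close to I. *)
lemma separation:
  fixes A B :: "complex^2^2"
  assumes "4/9 \<le> dev_sq B"
  shows "4/3 - norm (A + B - mat 1) \<le> norm (A - B)"
proof -
  have d: "((B + B - mat 1)$1$1 - (B + B - mat 1)$2$2) / 2 = 2 * ((B$1$1 - B$2$2) / 2)"
    and b: "(B + B - mat 1)$1$2 = 2 * B$1$2" and c: "(B + B - mat 1)$2$1 = 2 * B$2$1"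
    by (simp_all add: mat1_2 field_simps)
  have "dev_sq (B + B - mat 1) = 4 * dev_sq B"
    unfolding dev_sq_def d b c norm_mult power_mult_distrib by simp
  then have "16/9 \<le> (norm (B + B - mat 1))^2"
    using norm_sq_split[of "B + B - mat 1"] assms zero_le_power2[of "cmod (mtrace (B + B - mat 1))"]
    by linarith
  then have "(4/3)^2 \<le> (norm (B + B - mat 1))^2"
    by (simp add: power_divide)
  then have "4/3 \<le> norm (B + B - mat 1)"
    by (rule power2_le_imp_le) simp
  moreover have "norm (B + B - mat 1) \<le> norm (A + B - mat 1) + norm (A - B)"
    using norm_triangle_ineq4[of "A + B - mat 1" "A - B"] by simp
  ultimately show ?thesis
    by linarith
qed

theorem lemmal:
  fixes \<theta> :: "'a::ab_semigroup_mult \<Rightarrow> complex^2^2"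
    and \<delta> :: real and e f :: 'a
  assumes idem: "\<And>x::'a. x * x = x"
    and d0: "0 \<le> \<delta>" and d1: "\<delta> < 0.03"
    and approx: "\<And>x y. hs_norm (\<theta> x ** \<theta> y - \<theta> (x * y)) \<le> \<delta>"
    and e: "e \<in> Sk \<theta> 1" and f: "f \<in> Sk \<theta> 1"
    and ef: "e * f \<in> Sk \<theta> 0"
  shows "hs_norm (\<theta> e + \<theta> f - mat 1) \<le> 10 * \<delta>
     \<and> hs_norm (\<theta> e - \<theta> f) \<ge> 4/3 - 10 * \<delta>
     \<and> 4/3 - 10 * \<delta> > 1"
proof -
  have \<delta>: "0 \<le> \<delta>" "\<delta> \<le> 3/100"
    using d0 d1 by simp_all
  have mult: "norm (\<theta> x ** \<theta> y - \<theta> (x * y)) \<le> \<delta>" for x y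
    using approx[of x y] by (simp add: hs_norm_eq_norm)
  have idem_defect: "norm (\<theta> x ** \<theta> x - \<theta> x) \<le> \<delta>" for x
    using mult[of x x] by (simp add: idem)
  have tr: "cmod (mtrace (\<theta> e) - 1) < 95/100" "cmod (mtrace (\<theta> f) - 1) < 95/100"
    "cmod (mtrace (\<theta> (e * f))) < 95/100"
    using e f ef by (simp_all add: Sk_def)
  have sum: "norm (\<theta> e + \<theta> f - mat 1) \<le> 10 * \<delta>"
    using complement_small[OF \<delta> idem_defect idem_defect idem_defect mult
        mult[of f e, unfolded mult.commute[of f e]] tr] .
  have "4/3 - 10 * \<delta> \<le> norm (\<theta> e - \<theta> f)"
    using separation[OF trace_near_one(2)[OF idem_defect \<delta> tr(2)], of "\<theta> e"] sum by linarith
  then show ?thesis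
    using sum \<delta> by (simp add: hs_norm_eq_norm)
qed
end
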